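(* Let $n\ge w\ge t\ge 1$ and $q,q'\ge 1$ be integers. Let $S\subset Q_{q*}^n$ be an $H(n,q,w,t)$ design and let $R\subset Q_{q'*}^w$ be an $H(w,q',w,t)$ design (i.e. an MDS code of length $w$ over $Q_{q'}$ in which every word of weight $t$ in $Q_{q'*}^w$ is extended by exactly one codeword). For each pair consisting of a codeword $a\in S$, whose non-$*$ entries in increasing order of position are $a^1,\dots,a^w$, and a codeword $(b_1,\dots,b_w)\in R$, form the word in $(Q_q\times Q_{q'})_*^n$ which has $*$ exactly where $a$ has $*$, and whose $j$-th non-$*$ entry (in increasing order of position) is the pair $(a^j,b_j)$, $j=1,\dots,w$. Identifying $Q_q\times Q_{q'}$ with $Q_{qq'}$, let $T\subset Q_{qq'*}^n$ be the set of all such words. Then $T$ is an $H(n,qq',w,t)$ design.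
   Context: For an integer $q\ge1$, $Q_q=\{0,1,\dots,q-1\}$ and $Q_{q*}=Q_q\cup\{*\}$ (for any finite alphabet $A$, $A_*=A\cup\{*\}$). The weight of a word $u\in Q_{q*}^n$ is $n$ minus the number of $*$ symbols in $u$. For $u,v\in Q_{q*}^n$ we say $u$ extends $v$ if $u_i=v_i$ for every position $i$ with $v_i\neq *$ (equivalently, viewing $u$ as the face $F(u)=\{x\in Q_q^n: x_i=u_i \text{ whenever } u_i\ne *\}$ of the hypercube $Q_q^n$, $F(u)\subseteq F(v)$). An $H(n,q,w,t)$ design is a set $S$ of words of weight $w$ in $Q_{q*}^n$ such that every word of weight $t$ in $Q_{q*}^n$ is extended by exactly one element of $S$. *)

theory Defs
  imports Main
begin

text \<open>Words in A_*^n are lists of length n over 'a option; None plays the role of *.\<close>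

definition words :: "'a set \<Rightarrow> nat \<Rightarrow> 'a option list set" where
  "words A n = {u. length u = n \<and> (\<forall>x\<in>set u. x = None \<or> the x \<in> A)}"

definition weight :: "'a option list \<Rightarrow> nat" where
  "weight u = length u - card {i. i < length u \<and> u ! i = None}"

definition extends :: "'a option list \<Rightarrow> 'a option list \<Rightarrow> bool" where
  "extends u v \<longleftrightarrow> length u = length v \<and> (\<forall>i<length v. v ! i \<noteq> None \<longrightarrow> u ! i = v ! i)"

text \<open>H(n,A,w,t) design over a general alphabet A; Q_q is {0..<q}.\<close>
definition H_design :: "nat \<Rightarrow> 'a set \<Rightarrow> nat \<Rightarrow> nat \<Rightarrow> 'a option list set \<Rightarrow> bool" where
  "H_design n A w t S \<longleftrightarrow>
     S \<subseteq> {u \<in> words A n. weight u = w} \<and>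
     (\<forall>v \<in> words A n. weight v = t \<longrightarrow> (\<exists>!u. u \<in> S \<and> extends u v))"

fun merge :: "'a option list \<Rightarrow> 'b list \<Rightarrow> ('a \<times> 'b) option list" where
  "merge [] bs = []"
| "merge (None # as) bs = None # merge as bs"
| "merge (Some x # as) (y # bs) = Some (x, y) # merge as bs"
| "merge (Some x # as) [] = None # merge as []"

text \<open>Identification of Q_q \<times> Q_q' with Q_{qq'}: (x,y) \<mapsto> x*q' + y.\<close>
definition pair_code :: "nat \<Rightarrow> nat \<times> nat \<Rightarrow> nat" where
  "pair_code q' p = fst p * q' + snd p"

definition product_design :: "nat \<Rightarrow> nat option list set \<Rightarrow> nat option list set \<Rightarrow> nat option list set" where
  "product_design q' S R =
     {map (map_option (pair_code q')) (merge a (map the b)) | a b. a \<in> S \<and> b \<in> R}"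

end

theory Submission
  imports Defs
begin

text \<open>A word v of weight t over Q_{qq'} splits, coordinatewise via c \<mapsto> (c div q', c mod q'),
  into a word of weight t over Q_q and one over Q_q'. A merged word extends v exactly when its
  S-part extends the first component and its R-part extends the second component read off on the
  support of the S-part; that restriction again has weight t, because the S-part covers the support
  of v. So the unique extension of v in T is assembled from the unique extension in S and then the
  unique extension in R.\<close>

lemma weight_conv_length_filter: "weight u = length (filter (\<lambda>x. x \<noteq> None) u)"
proof -
  have "card {i. i < length u \<and> u ! i = None} = length (filter (\<lambda>x. x = None) u)"
    by (simp add: length_filter_conv_card)
  then show ?thesis
    using sum_length_filter_compl[of "\<lambda>x. x \<noteq> None" u] by (simp add: weight_def)
qed

lemma weight_Nil [simp]: "weight [] = 0"
  and weight_Cons [simp]: "weight (x # u) = (if x = None then weight u else Suc (weight u))"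
  by (simp_all add: weight_conv_length_filter)

lemma weight_le_length: "weight u \<le> length u"
  by (simp add: weight_conv_length_filter)

lemma weight_map_map_option [simp]: "weight (map (map_option f) u) = weight u"
  by (induction u) auto

lemma weight_eq_length_iff: "weight u = length u \<longleftrightarrow> None \<notin> set u"
proof (induction u)
  case (Cons x u)
  then show ?case using weight_le_length[of u] by auto
qed simp

lemma full_weight_wordE:
  assumes "b \<in> words A n" "weight b = n"
  obtains bs where "b = map Some bs" "length bs = n" "set bs \<subseteq> A"
proof
  have "None \<notin> set b"
    using assms weight_eq_length_iff[of b] by (simp add: words_def)
  then show "b = map Some (map the b)"
    by (induction b) auto
  show "length (map the b) = n" "set (map the b) \<subseteq> A"
    using assms(1) \<open>None \<notin> set b\<close> by (auto simp: words_def)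
qed

lemma extends_Nil_left [simp]: "extends [] v \<longleftrightarrow> v = []"
  and extends_Nil_right [simp]: "extends u [] \<longleftrightarrow> u = []"
  by (auto simp: extends_def)

lemma extends_Cons_Cons [simp]:
  "extends (x # u) (y # v) \<longleftrightarrow> (y \<noteq> None \<longrightarrow> x = y) \<and> extends u v"
  by (auto simp: extends_def nth_Cons less_Suc_eq_0_disj split: nat.splits)

lemma length_merge [simp]: "length (merge a bs) = length a"
  by (induction a bs rule: merge.induct) auto

lemma weight_merge: "length bs = weight a \<Longrightarrow> weight (merge a bs) = weight a"
  by (induction a bs rule: merge.induct) auto

lemma set_merge:
  "z \<in> set (merge a bs) \<Longrightarrow> z = None \<or> (\<exists>x y. z = Some (x, y) \<and> Some x \<in> set a \<and> y \<in> set bs)"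
  by (induction a bs rule: merge.induct) auto

fun select_support :: "'a option list \<Rightarrow> 'b list \<Rightarrow> 'b list" where
  "select_support (None # a) (y # v) = select_support a v"
| "select_support (Some _ # a) (y # v) = y # select_support a v"
| "select_support _ _ = []"

lemma set_select_support: "set (select_support a v) \<subseteq> set v"
  by (induction a v rule: select_support.induct) auto

lemma length_select_support: "length v = length a \<Longrightarrow> length (select_support a v) = weight a"
  by (induction a v rule: select_support.induct) auto

lemma select_support_words:
  "v \<in> words A (length a) \<Longrightarrow> select_support a v \<in> words A (weight a)"
  using set_select_support[of a v] by (auto simp: words_def length_select_support)

lemma weight_select_support:
  "extends a (map (map_option f) v) \<Longrightarrow> weight (select_support a (map (map_option g) v)) = weight v"
proof (induction a arbitrary: v)
  case (Cons x a)
  then show ?case by (cases v; cases x) auto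
qed simp

lemma pair_code_eq_iff:
  "y < q' \<Longrightarrow> pair_code q' (x, y) = c \<longleftrightarrow> x = c div q' \<and> y = c mod q'"
  by (auto simp: pair_code_def)

lemma pair_code_less: "x < q \<Longrightarrow> y < q' \<Longrightarrow> pair_code q' (x, y) < q * q'"
proof -
  assume "x < q" "y < q'"
  then have "x * q' + y < (x + 1) * q'" by simp
  also have "\<dots> \<le> q * q'" using \<open>x < q\<close> by (intro mult_right_mono) auto
  finally show ?thesis by (simp add: pair_code_def)
qed

lemma extends_merge_iff:
  assumes "length bs = weight a" "set bs \<subseteq> {0..<q'}"
  shows "extends (map (map_option (pair_code q')) (merge a bs)) v \<longleftrightarrow>
    extends a (map (map_option (\<lambda>c. c div q')) v) \<and>
    extends (map Some bs) (select_support a (map (map_option (\<lambda>c. c mod q')) v))"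
  using assms
proof (induction a arbitrary: bs v)
  case Nil
  then show ?case by (cases v) auto
next
  case (Cons x a)
  show ?case
  proof (cases x)
    case None
    with Cons show ?thesis by (cases v) auto
  next
    case (Some x')
    with Cons.prems obtain y bs' where bs: "bs = y # bs'" "y < q'"
      by (cases bs) auto
    show ?thesis
    proof (cases v)
      case (Cons d v')
      have "extends (map (map_option (pair_code q')) (merge a bs')) v' \<longleftrightarrow>
          extends a (map (map_option (\<lambda>c. c div q')) v') \<and>
          extends (map Some bs') (select_support a (map (map_option (\<lambda>c. c mod q')) v'))"
        using Cons.IH[of bs' v'] Cons.prems Some bs by auto
      with Cons Some bs show ?thesis
        by (cases d) (auto simp: pair_code_eq_iff)
    qed (simp add: Some bs)
  qed
qed

lemma div_words:
  fixes q q' :: nat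
  assumes "v \<in> words {0..<q * q'} n"
  shows "map (map_option (\<lambda>c. c div q')) v \<in> words {0..<q} n"
proof -
  have "map_option (\<lambda>c. c div q') x = None \<or> the (map_option (\<lambda>c. c div q') x) < q"
    if "x \<in> set v" for x
    using assms that by (cases x) (auto simp: words_def less_mult_imp_div_less)
  with assms show ?thesis by (auto simp: words_def)
qed

lemma mod_words:
  assumes "(q' :: nat) > 0"
  shows "map (map_option (\<lambda>c. c mod q')) v \<in> words {0..<q'} (length v)"
proof -
  have "map_option (\<lambda>c. c mod q') x = None \<or> the (map_option (\<lambda>c. c mod q') x) < q'" for x
    using assms by (cases x) auto
  then show ?thesis by (auto simp: words_def)
qed

lemma select_support_mod:
  fixes q' :: nat
  assumes "q' > 0" "length v = length a" "extends a (map (map_option (\<lambda>c. c div q')) v)"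
  shows "select_support a (map (map_option (\<lambda>c. c mod q')) v) \<in> words {0..<q'} (weight a)"
    and "weight (select_support a (map (map_option (\<lambda>c. c mod q')) v)) = weight v"
  using select_support_words[of _ "{0..<q'}" a] mod_words[OF assms(1), of v] assms(2)
    weight_select_support[OF assms(3)] by simp_all

lemma H_design_full_weightE:
  assumes "H_design w A w t R" "b \<in> R"
  obtains bs where "b = map Some bs" "length bs = w" "set bs \<subseteq> A"
proof -
  have "b \<in> words A w" "weight b = w"
    using assms by (auto simp: H_design_def)
  then show ?thesis by (rule full_weight_wordE) (rule that)
qed

lemma product_design_conv_map_Some:
  assumes "\<And>b. b \<in> R \<Longrightarrow> \<exists>bs. b = map Some bs"
  shows "product_design q' S R =
    {map (map_option (pair_code q')) (merge a bs) | a bs. a \<in> S \<and> map Some bs \<in> R}"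
proof (intro equalityI subsetI)
  fix u assume "u \<in> product_design q' S R"
  then obtain a b where u: "u = map (map_option (pair_code q')) (merge a (map the b))"
    and "a \<in> S" "b \<in> R"
    unfolding product_design_def by blast
  moreover obtain bs where "b = map Some bs"
    using assms[OF \<open>b \<in> R\<close>] by blast
  ultimately show "u \<in> {map (map_option (pair_code q')) (merge a bs) | a bs. a \<in> S \<and> map Some bs \<in> R}"
    by (auto simp: comp_def)
next
  fix u assume "u \<in> {map (map_option (pair_code q')) (merge a bs) | a bs. a \<in> S \<and> map Some bs \<in> R}"
  then obtain a bs where "u = map (map_option (pair_code q')) (merge a (map the (map Some bs)))"
    and "a \<in> S" "map Some bs \<in> R"
    by (auto simp: comp_def)
  then show "u \<in> product_design q' S R"
    unfolding product_design_def by blast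
qed

lemma product_design_words:
  assumes "S \<subseteq> {a \<in> words {0..<q} n. weight a = w}"
    and "R \<subseteq> {b \<in> words {0..<q'} w. weight b = w}"
  shows "product_design q' S R \<subseteq> {u \<in> words {0..<q * q'} n. weight u = w}"
proof
  fix u assume "u \<in> product_design q' S R"
  then obtain a b where u: "u = map (map_option (pair_code q')) (merge a (map the b))"
    and "a \<in> S" "b \<in> R"
    unfolding product_design_def by auto
  then have a: "a \<in> words {0..<q} n" "weight a = w" and b: "b \<in> words {0..<q'} w" "weight b = w"
    using assms by auto
  from b obtain bs where bs: "b = map Some bs" "length bs = w" "set bs \<subseteq> {0..<q'}"
    by (rule full_weight_wordE)
  have u_bs: "u = map (map_option (pair_code q')) (merge a bs)"
    using u bs(1) by (simp add: comp_def)
  have "map_option (pair_code q') z = None \<or> the (map_option (pair_code q') z) < q * q'"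
    if "z \<in> set (merge a bs)" for z
    using set_merge[OF that]
  proof
    assume "\<exists>x y. z = Some (x, y) \<and> Some x \<in> set a \<and> y \<in> set bs"
    then obtain x y where "z = Some (x, y)" "Some x \<in> set a" "y \<in> set bs" by blast
    moreover from this a(1) bs(3) have "x < q" "y < q'" by (force simp: words_def)+
    ultimately show ?thesis by (simp add: pair_code_less)
  qed simp
  then have "\<forall>z \<in> set u. z = None \<or> the z \<in> {0..<q * q'}"
    by (force simp: u_bs)
  moreover have "length u = n" "weight u = w"
    using a bs by (simp_all add: u_bs words_def weight_merge)
  ultimately show "u \<in> {u \<in> words {0..<q * q'} n. weight u = w}"
    by (simp add: words_def)
qed

lemma extends_merge_iff_design:
  assumes "H_design w {0..<q'} w t R" "map Some bs \<in> R" "weight a = w"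
  shows "extends (map (map_option (pair_code q')) (merge a bs)) v \<longleftrightarrow>
    extends a (map (map_option (\<lambda>c. c div q')) v) \<and>
    extends (map Some bs) (select_support a (map (map_option (\<lambda>c. c mod q')) v))"
proof -
  obtain bs' where "map Some bs = map Some bs'" "length bs' = w" "set bs' \<subseteq> {0..<q'}"
    using assms(1,2) by (rule H_design_full_weightE)
  then have "length bs = weight a" "set bs \<subseteq> {0..<q'}"
    using assms(3) by (simp_all add: inj_map_eq_map)
  then show ?thesis
    by (rule extends_merge_iff)
qed

lemma product_design_unique_extension:
  fixes q q' :: nat
  assumes S: "H_design n {0..<q} w t S" and R: "H_design w {0..<q'} w t R" and "q' > 0"
    and v: "v \<in> words {0..<q * q'} n" "weight v = t"
  shows "\<exists>!u. u \<in> product_design q' S R \<and> extends u v"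
proof -
  define vq where "vq = map (map_option (\<lambda>c. c div q')) v"
  define vq' where "vq' = map (map_option (\<lambda>c. c mod q')) v"
  have S_words: "a \<in> words {0..<q} n" "weight a = w" if "a \<in> S" for a
    using S that by (auto simp: H_design_def)
  have product_design_eq: "product_design q' S R =
      {map (map_option (pair_code q')) (merge a bs) | a bs. a \<in> S \<and> map Some bs \<in> R}"
    by (rule product_design_conv_map_Some) (blast elim: H_design_full_weightE[OF R])
  have extends_iff: "extends (map (map_option (pair_code q')) (merge a bs)) v \<longleftrightarrow>
      extends a vq \<and> extends (map Some bs) (select_support a vq')"
    if "a \<in> S" "map Some bs \<in> R" for a bs
    unfolding vq_def vq'_def using R that(2) S_words(2)[OF that(1)]
    by (rule extends_merge_iff_design)
  have "vq \<in> words {0..<q} n" "weight vq = t"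
    using div_words[OF v(1)] v(2) by (simp_all add: vq_def)
  with S obtain a where a: "a \<in> S" "extends a vq"
    and a_unique: "\<And>a'. a' \<in> S \<Longrightarrow> extends a' vq \<Longrightarrow> a' = a"
    unfolding H_design_def by metis
  have "select_support a vq' \<in> words {0..<q'} w" "weight (select_support a vq') = t"
    using select_support_mod[OF \<open>q' > 0\<close>, of v a] S_words[OF a(1)] a(2) v
    by (simp_all add: vq_def vq'_def words_def)
  with R obtain b where b: "b \<in> R" "extends b (select_support a vq')"
    and b_unique: "\<And>b'. b' \<in> R \<Longrightarrow> extends b' (select_support a vq') \<Longrightarrow> b' = b"
    unfolding H_design_def by metis
  obtain bs where bs: "b = map Some bs"
    using R b(1) by (rule H_design_full_weightE)
  show ?thesis
    unfolding product_design_eq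
  proof (rule ex1I)
    show "map (map_option (pair_code q')) (merge a bs) \<in>
          {map (map_option (pair_code q')) (merge a bs) | a bs. a \<in> S \<and> map Some bs \<in> R} \<and>
        extends (map (map_option (pair_code q')) (merge a bs)) v"
      using a b bs extends_iff[of a bs] by blast
  next
    fix u
    assume "u \<in> {map (map_option (pair_code q')) (merge a bs) | a bs. a \<in> S \<and> map Some bs \<in> R} \<and>
      extends u v"
    then obtain a' bs' where u: "u = map (map_option (pair_code q')) (merge a' bs')"
      and "a' \<in> S" "map Some bs' \<in> R" "extends u v"
      by blast
    then have "a' = a" "map Some bs' = b"
      using extends_iff a_unique b_unique by metis+
    then show "u = map (map_option (pair_code q')) (merge a bs)"
      using u bs by (simp add: inj_map_eq_map)
  qed
qed

theorem proposition1:
  fixes n w t q q' :: nat and S R :: "nat option list set"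
  assumes "n \<ge> w" and "w \<ge> t" and "t \<ge> 1" and "q \<ge> 1" and "q' \<ge> 1"
    and "H_design n {0..<q} w t S"
    and "H_design w {0..<q'} w t R"
  shows "H_design n {0..<q * q'} w t (product_design q' S R)"
proof -
  have "S \<subseteq> {a \<in> words {0..<q} n. weight a = w}" "R \<subseteq> {b \<in> words {0..<q'} w. weight b = w}"
    using assms(6,7) by (simp_all add: H_design_def)
  then have "product_design q' S R \<subseteq> {u \<in> words {0..<q * q'} n. weight u = w}"
    by (rule product_design_words)
  moreover have "\<exists>!u. u \<in> product_design q' S R \<and> extends u v"
    if "v \<in> words {0..<q * q'} n" "weight v = t" for v
    using product_design_unique_extension[OF assms(6,7)] assms(5) that by simp
  ultimately show ?thesis
    unfolding H_design_def by blast
qed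

end
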